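(* Let $t\le n-2$, and let $P^{\mathit{fip}}$ be any implementation of the knowledge-based program $\mathbf P^1$ with respect to $\gamma_{\mathit{fip},n,t}$. Consider a failure-free run (no message is lost and every agent is nonfaulty). (a) If at least one agent has initial preference $0$, then all agents decide by round $2$, with each of $P^{\min}$ (in $\gamma_{\min,n,t}$), $P^{\mathit{basic}}$ (in $\gamma_{\mathit{basic},n,t}$) and $P^{\mathit{fip}}$ (in $\gamma_{\mathit{fip},n,t}$). (b) If all agents have initial preference $1$, then all agents decide by round $t+2$ with $P^{\min}$, and by round $2$ with $P^{\mathit{basic}}$ and with $P^{\mathit{fip}}$.
   Context: Agents and runs. There are $n$ agents $\mathit{Agt}=\{1,\ldots,n\}$; time is $m\in\mathbb N$, and round $m+1$ is the step from time $m$ to time $m+1$; agent $i$ decides $v$ in round $k$ if it performs $\mathtt{decide}_i(v)$ at time $k-1$. A failure pattern is a pair $(\mathcal N,F)$ with $\mathcal N\subseteq\mathit{Agt}$ (nonfaulty agents) and $F:\mathbb N\times\mathit{Agt}\times\mathit{Agt}\to\{0,1\}$, $F(m,i,j)=0$ meaning the round-$(m+1)$ message from $i$ to $j$ is lost. $SO(t)$ is the set of failure patterns with $|\mathit{Agt}\setminus\mathcal N|\le t$ and $F(m,i,j)=0\Rightarrow i\notin\mathcal N$. An action protocol maps each agent's local states to actions $\{\mathtt{decide}_i(0),\mathtt{decide}_i(1),\mathtt{noop}\}$; with an initial global state it determines a run: at each time each agent performs its action, sends its messages (lost ones replaced by $\bot$), and updates its state. $\mathcal I,(r,m)\models K_i\varphi$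 iff $\varphi$ holds at all points $(r',m')$ with $r'_i(m')=r_i(m)$; $\bigcirc,\ominus$ are next/previous time. Minimal and basic contexts. $\gamma_{\min,n,t}$: failure model $SO(t)$; local states $\langle\mathit{time}_i,\mathit{init}_i,\mathit{decided}_i,\mathit{rd}_i\rangle$, initial states $\langle0,\mathit{init}_i,\bot,\bot\rangle$; an agent performing $\mathtt{decide}_i(v)$ sends $v$ to every agent, otherwise sends nothing; the transition increments $\mathit{time}_i$, sets $\mathit{decided}_i:=v$ on $\mathtt{decide}_i(v)$, and sets $\mathit{rd}_i$ to $0$ (resp. $1$) if in that round $i$ received $0$ (resp. $1$), else $\bot$. $\gamma_{\mathit{basic},n,t}$: as $\gamma_{\min,n,t}$ but with an extra component $\#1_i\in\{0,\ldots,n\}$ (initially $0$); an agent in state $\langle m,1,\bot,\bot,k\rangle$ performing $\mathtt{noop}$ sends $(\mathit{init},1)$ to every agent; $\#1_i$ is set to the number of $(\mathit{init},1)$ messages received in the round if $\mathit{decided}_i=\bot$ and $i$ receives no message $0$ or $1$ in that round, and to $0$ otherwise. $P^{\min}_i$: if $\mathit{decided}_i\ne\bot$ then $\mathtt{noop}$; else if $\mathit{init}_i=0$ or $\mathit{rd}_i=0$ then $\mathtt{decide}_i(0)$; else if $\mathit{time}_i=t+1$ then $\mathtt{decide}_i(1)$; else $\mathtt{noop}$. $P^{\mathit{basic}}_i$: if $\mathit{decided}_i\ne\bot$ then $\mathtt{noop}$; else if $\mathit{init}_i=0$ or $\mathit{rd}_i=0$ then $\mathtt{decide}_i(0)$;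 else if $\#1_i>n-\mathit{time}_i$ or $\mathit{rd}_i=1$ then $\mathtt{decide}_i(1)$; else $\mathtt{noop}$. Full-information context. $\gamma_{\mathit{fip},n,t}$ has failure model $SO(t)$; each agent's local state consists of its time, its initial preference $\mathit{init}_i$, and the complete record of all messages received; in every round every agent sends its entire local state to every agent regardless of its action. Given a protocol $P$, $\mathcal I_{\gamma_{\mathit{fip},n,t},P}$ is the system of its runs, with $\mathit{decided}_i=v$ true at $(r,m)$ iff $i$ decided $v$ in some round $\le m$ ($\bot$ if not yet), $\mathit{init}_i=v$ read from the state and $i\in\mathcal N$ iff $i\in\mathcal N(r)$. Abbreviations: $\exists v$ is $\bigvee_j\mathit{init}_j=v$; $\mathit{jdecided}_i=v$ is $\mathit{decided}_i=v\wedge\ominus(\mathit{decided}_i=\bot)$; $\mathit{deciding}_i=v$ is $\mathit{decided}_i=\bot\wedge\bigcirc(\mathit{decided}_i=v)$. A knowledge-based program has each $\mathbf P_i$ a nested if-then-else over actions with tests built from formulas $K_i\psi$ and local propositions; $P$ implements it if, in $\mathcal I_{\gamma_{\mathit{fip},n,t},P}$, $P_i(s)$ equals the action obtained by evaluating the tests at $s$, for every arising local state $s$. $E_{\mathcal N}\varphi$ holds at $(r,m)$ iff $K_j\varphi$ holds for all $j\in\mathcal N(r)$; $C_{\mathcal N}\varphi$ iff $E_{\mathcal N}^k\varphi$ for all $k\ge1$; $C_{\mathcal N}(\mathit{t\text{-}faulty}\wedge\varphi)$ abbreviates $\bigvee_{|A|=t}C_{\mathcal N}(\bigwedge_{i\in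 A}\neg(i\in\mathcal N)\wedge\varphi)$; $\mathit{no\text{-}decided}_{\mathcal N}(x)$ abbreviates $\bigwedge_{j\in\mathcal N}\neg(\mathit{decided}_j=x)$. $\mathbf P^1_i$: if $\mathit{decided}_i\ne\bot$ then $\mathtt{noop}$; else if $K_i(C_{\mathcal N}(\mathit{t\text{-}faulty}\wedge\mathit{no\text{-}decided}_{\mathcal N}(1)\wedge\exists0))$ then $\mathtt{decide}_i(0)$; else if $K_i(C_{\mathcal N}(\mathit{t\text{-}faulty}\wedge\mathit{no\text{-}decided}_{\mathcal N}(0)\wedge\exists1))$ then $\mathtt{decide}_i(1)$; else if $\mathit{init}_i=0\vee K_i(\bigvee_{j}\mathit{jdecided}_j=0)$ then $\mathtt{decide}_i(0)$; else if $K_i(\bigwedge_{j}\neg(\mathit{deciding}_j=0))$ then $\mathtt{decide}_i(1)$; else $\mathtt{noop}$. *)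

theory Defs
  imports Main
begin

text \<open>Values are the naturals 0 and 1. A failure pattern
  is a pair (N, F); F m i j = True means the round-(m+1) message from i to j
  is delivered (the paper's F(m,i,j)=1), False means it is lost.\<close>

definition Agt :: "nat \<Rightarrow> nat set" where
  "Agt n = {1..n}"

type_synonym fpat = "nat \<Rightarrow> nat \<Rightarrow> nat \<Rightarrow> bool"

definition SO :: "nat \<Rightarrow> nat \<Rightarrow> (nat set \<times> fpat) set" where
  "SO n t = {(N, F). N \<subseteq> Agt n \<and> card (Agt n - N) \<le> t \<and>
                     (\<forall>m i j. \<not> F m i j \<longrightarrow> i \<notin> N)}"

datatype act = Decide nat | Noop

record mstate =
  m_time :: nat
  m_init :: nat
  m_dec  :: "nat option"
  m_rd   :: "nat option"

definition Pmin :: "nat \<Rightarrow> mstate \<Rightarrow> act" where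
  "Pmin t s =
     (if m_dec s \<noteq> None then Noop
      else if m_init s = 0 \<or> m_rd s = Some 0 then Decide 0
      else if m_time s = t + 1 then Decide 1
      else Noop)"

primrec min_st :: "nat \<Rightarrow> nat \<Rightarrow> (nat \<Rightarrow> nat) \<Rightarrow> fpat \<Rightarrow> nat \<Rightarrow> nat \<Rightarrow> mstate" where
  "min_st n t init F 0 i = \<lparr>m_time = 0, m_init = init i, m_dec = None, m_rd = None\<rparr>"
| "min_st n t init F (Suc m) i =
     (let s = min_st n t init F m i;
          recv = (\<lambda>v. \<exists>j\<in>Agt n. F m j i \<and> Pmin t (min_st n t init F m j) = Decide v)
      in \<lparr>m_time = Suc (m_time s), m_init = m_init s,
          m_dec = (case Pmin t s of Decide v \<Rightarrow> Some v | Noop \<Rightarrow> m_dec s),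
          m_rd = (if recv 0 then Some 0 else if recv 1 then Some 1 else None)\<rparr>)"

definition min_decides_by :: "nat \<Rightarrow> nat \<Rightarrow> (nat \<Rightarrow> nat) \<Rightarrow> fpat \<Rightarrow> nat \<Rightarrow> nat \<Rightarrow> bool" where
  "min_decides_by n t init F i k = (\<exists>m<k. Pmin t (min_st n t init F m i) \<noteq> Noop)"

record bstate =
  b_time :: nat
  b_init :: nat
  b_dec  :: "nat option"
  b_rd   :: "nat option"
  b_cnt  :: nat

datatype bmsg = MVal nat | MInit1

definition Pbasic :: "nat \<Rightarrow> bstate \<Rightarrow> act" where
  "Pbasic n s =
     (if b_dec s \<noteq> None then Noop
      else if b_init s = 0 \<or> b_rd s = Some 0 then Decide 0
      else if int (b_cnt s) > int n - int (b_time s) \<or> b_rd s = Some 1 then Decide 1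
      else Noop)"

definition b_send :: "bstate \<Rightarrow> act \<Rightarrow> bmsg option" where
  "b_send s a = (case a of Decide v \<Rightarrow> Some (MVal v)
     | Noop \<Rightarrow> (if b_init s = 1 \<and> b_dec s = None \<and> b_rd s = None
                then Some MInit1 else None))"

primrec basic_st :: "nat \<Rightarrow> (nat \<Rightarrow> nat) \<Rightarrow> fpat \<Rightarrow> nat \<Rightarrow> nat \<Rightarrow> bstate" where
  "basic_st n init F 0 i =
     \<lparr>b_time = 0, b_init = init i, b_dec = None, b_rd = None, b_cnt = 0\<rparr>"
| "basic_st n init F (Suc m) i =
     (let s = basic_st n init F m i;
          snd_j = (\<lambda>j. b_send (basic_st n init F m j) (Pbasic n (basic_st n init F m j)));
          recv = (\<lambda>v. \<exists>j\<in>Agt n. F m j i \<and> snd_j j = Some (MVal v));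
          c1 = card {j\<in>Agt n. F m j i \<and> snd_j j = Some MInit1}
      in \<lparr>b_time = Suc (b_time s), b_init = b_init s,
          b_dec = (case Pbasic n s of Decide v \<Rightarrow> Some v | Noop \<Rightarrow> b_dec s),
          b_rd = (if recv 0 then Some 0 else if recv 1 then Some 1 else None),
          b_cnt = (if b_dec s = None \<and> \<not> recv 0 \<and> \<not> recv 1 then c1 else 0)\<rparr>)"

definition basic_decides_by :: "nat \<Rightarrow> (nat \<Rightarrow> nat) \<Rightarrow> fpat \<Rightarrow> nat \<Rightarrow> nat \<Rightarrow> bool" where
  "basic_decides_by n init F i k = (\<exists>m<k. Pbasic n (basic_st n init F m i) \<noteq> Noop)"

text \<open>A full-information local state: the initial preference, then for each
  round the list (indexed by senders 1..n) of received messages, each being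
  the sender's previous local state, or None (= bottom) if lost. The time is
  the number of FStep layers.\<close>
datatype fstate = FInit nat | FStep fstate "fstate option list"

type_synonym run = "(nat \<Rightarrow> nat) \<times> nat set \<times> fpat"
type_synonym fml = "run \<Rightarrow> nat \<Rightarrow> bool"

definition r_init :: "run \<Rightarrow> nat \<Rightarrow> nat" where "r_init r = fst r"
definition r_N :: "run \<Rightarrow> nat set" where "r_N r = fst (snd r)"
definition r_F :: "run \<Rightarrow> fpat" where "r_F r = snd (snd r)"

primrec fip_st :: "nat \<Rightarrow> run \<Rightarrow> nat \<Rightarrow> nat \<Rightarrow> fstate" where
  "fip_st n r 0 i = FInit (r_init r i)"
| "fip_st n r (Suc m) i =
     FStep (fip_st n r m i)
           (map (\<lambda>j. if r_F r m j i then Some (fip_st n r m j) else None) [1..<n+1])"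

definition fip_runs :: "nat \<Rightarrow> nat \<Rightarrow> run set" where
  "fip_runs n t = {r. (\<forall>j\<in>Agt n. r_init r j \<in> {0,1}) \<and> (r_N r, r_F r) \<in> SO n t}"

definition K :: "nat \<Rightarrow> nat \<Rightarrow> nat \<Rightarrow> fml \<Rightarrow> fml" where
  "K n t i \<phi> r m = (\<forall>r'\<in>fip_runs n t. \<forall>m'. fip_st n r' m' i = fip_st n r m i \<longrightarrow> \<phi> r' m')"

definition E :: "nat \<Rightarrow> nat \<Rightarrow> fml \<Rightarrow> fml" where
  "E n t \<phi> r m = (\<forall>j\<in>r_N r. K n t j \<phi> r m)"

definition C :: "nat \<Rightarrow> nat \<Rightarrow> fml \<Rightarrow> fml" where
  "C n t \<phi> r m = (\<forall>k\<ge>1. ((E n t) ^^ k) \<phi> r m)"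

definition C_tfaulty :: "nat \<Rightarrow> nat \<Rightarrow> fml \<Rightarrow> fml" where
  "C_tfaulty n t \<phi> r m = (\<exists>A. A \<subseteq> Agt n \<and> card A = t \<and>
       C n t (\<lambda>r' m'. (\<forall>i\<in>A. i \<notin> r_N r') \<and> \<phi> r' m') r m)"

type_synonym fprot = "nat \<Rightarrow> fstate \<Rightarrow> act"

definition fip_act :: "fprot \<Rightarrow> nat \<Rightarrow> run \<Rightarrow> nat \<Rightarrow> nat \<Rightarrow> act" where
  "fip_act P n r m i = P i (fip_st n r m i)"

text \<open>decided_i at (r,m): the value of i's (first) decision in a round \<le> m,
  i.e. performed at some time < m; None (= bottom) if none yet.\<close>
definition fip_decided :: "fprot \<Rightarrow> nat \<Rightarrow> run \<Rightarrow> nat \<Rightarrow> nat \<Rightarrow> nat option" where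
  "fip_decided P n r m i =
     (if \<exists>k<m. fip_act P n r k i \<noteq> Noop
      then (case fip_act P n r (LEAST k. fip_act P n r k i \<noteq> Noop) i of
              Decide v \<Rightarrow> Some v | Noop \<Rightarrow> None)
      else None)"

definition ex_val :: "nat \<Rightarrow> nat \<Rightarrow> fml" where
  "ex_val n v r m = (\<exists>j\<in>Agt n. r_init r j = v)"

definition no_decided :: "fprot \<Rightarrow> nat \<Rightarrow> nat \<Rightarrow> fml" where
  "no_decided P n x r m = (\<forall>j\<in>r_N r. fip_decided P n r m j \<noteq> Some x)"

definition jdecided :: "fprot \<Rightarrow> nat \<Rightarrow> nat \<Rightarrow> nat \<Rightarrow> fml" where
  "jdecided P n j v r m =
     (fip_decided P n r m j = Some v \<and> 0 < m \<and> fip_decided P n r (m - 1) j = None)"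

definition deciding :: "fprot \<Rightarrow> nat \<Rightarrow> nat \<Rightarrow> nat \<Rightarrow> fml" where
  "deciding P n j v r m =
     (fip_decided P n r m j = None \<and> fip_decided P n r (Suc m) j = Some v)"

definition kbp1_act :: "fprot \<Rightarrow> nat \<Rightarrow> nat \<Rightarrow> nat \<Rightarrow> run \<Rightarrow> nat \<Rightarrow> act" where
  "kbp1_act P n t i r m =
     (if fip_decided P n r m i \<noteq> None then Noop
      else if K n t i (C_tfaulty n t (\<lambda>r' m'. no_decided P n 1 r' m' \<and> ex_val n 0 r' m')) r m
        then Decide 0
      else if K n t i (C_tfaulty n t (\<lambda>r' m'. no_decided P n 0 r' m' \<and> ex_val n 1 r' m')) r m
        then Decide 1
      else if r_init r i = 0 \<or> K n t i (\<lambda>r' m'. \<exists>j\<in>Agt n. jdecided P n j 0 r' m') r m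
        then Decide 0
      else if K n t i (\<lambda>r' m'. \<forall>j\<in>Agt n. \<not> deciding P n j 0 r' m') r m
        then Decide 1
      else Noop)"

definition implements_P1 :: "nat \<Rightarrow> nat \<Rightarrow> fprot \<Rightarrow> bool" where
  "implements_P1 n t P =
     (\<forall>r\<in>fip_runs n t. \<forall>m. \<forall>i\<in>Agt n. P i (fip_st n r m i) = kbp1_act P n t i r m)"

definition fip_decides_by :: "fprot \<Rightarrow> nat \<Rightarrow> run \<Rightarrow> nat \<Rightarrow> nat \<Rightarrow> bool" where
  "fip_decides_by P n r i k = (\<exists>m<k. fip_act P n r m i \<noteq> Noop)"

end

theory Submission
  imports Defs
begin

text \<open>In a failure-free run an agent with preference 0 decides 0 at once in all three
  contexts, and its message (or, in the full-information context, its initial state)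
  reaches everybody in round 1, so every other agent decides 0 in round 2. If all
  preferences are 1, P^min waits until time \<open>t + 1\<close>; in the basic context each agent
  receives \<open>n\<close> messages \<open>(init, 1)\<close> and decides 1 in round 2; in the full-information
  context nobody can decide 0 at time 0 or 1 in a run where all preferences are 1, and
  at time 1 every agent has seen all initial preferences, so it knows that nobody is
  deciding 0 and the last test of P^1 fires.\<close>

lemma min_decides_by_2_if_some_init0:
  assumes "i0 \<in> Agt n" "init i0 = 0" "init i \<in> {0, 1}"
  shows "min_decides_by n t init (\<lambda>_ _ _. True) i 2"
proof (cases "init i = 0")
  case True
  then show ?thesis
    unfolding min_decides_by_def by (intro exI[of _ 0]) (simp add: Pmin_def)
next
  case False
  with assms(3) have "init i = 1" by auto
  moreover have "Pmin t (min_st n t init (\<lambda>_ _ _. True) 0 i0) = Decide 0"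
    using assms(2) by (simp add: Pmin_def)
  ultimately have "Pmin t (min_st n t init (\<lambda>_ _ _. True) 1 i) = Decide 0"
    using assms(1) by (auto simp: Pmin_def Let_def)
  then show ?thesis
    unfolding min_decides_by_def by (intro exI[of _ 1]) simp
qed

lemma min_st_all_init1:
  assumes "\<forall>j\<in>Agt n. init j = 1" "m \<le> t + 1" "j \<in> Agt n"
  shows "min_st n t init (\<lambda>_ _ _. True) m j =
           \<lparr>m_time = m, m_init = 1, m_dec = None, m_rd = None\<rparr>"
  using assms(2,3)
proof (induction m arbitrary: j)
  case 0
  then show ?case using assms(1) by simp
next
  case (Suc m)
  then have "\<forall>k\<in>Agt n. Pmin t (min_st n t init (\<lambda>_ _ _. True) m k) = Noop"
    by (simp add: Pmin_def)
  then show ?case using Suc by (simp add: Let_def Pmin_def)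
qed

lemma min_decides_by_if_all_init1:
  assumes "\<forall>j\<in>Agt n. init j = 1" "i \<in> Agt n"
  shows "min_decides_by n t init (\<lambda>_ _ _. True) i (t + 2)"
  unfolding min_decides_by_def
  by (intro exI[of _ "t + 1"]) (simp add: min_st_all_init1[OF assms(1) _ assms(2)] Pmin_def)

lemma basic_decides_by_2_if_some_init0:
  assumes "i0 \<in> Agt n" "init i0 = 0" "init i \<in> {0, 1}"
  shows "basic_decides_by n init (\<lambda>_ _ _. True) i 2"
proof (cases "init i = 0")
  case True
  then show ?thesis
    unfolding basic_decides_by_def by (intro exI[of _ 0]) (simp add: Pbasic_def)
next
  case False
  with assms(3) have "init i = 1" by auto
  moreover have "\<exists>j\<in>Agt n. b_send (basic_st n init (\<lambda>_ _ _. True) 0 j)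
                   (Pbasic n (basic_st n init (\<lambda>_ _ _. True) 0 j)) = Some (MVal 0)"
    using assms(1,2) by (intro bexI[of _ i0]) (simp_all add: Pbasic_def b_send_def)
  ultimately have "Pbasic n (basic_st n init (\<lambda>_ _ _. True) 1 i) = Decide 0"
    by (auto simp: Pbasic_def Let_def)
  then show ?thesis
    unfolding basic_decides_by_def by (intro exI[of _ 1]) simp
qed

lemma basic_decides_by_2_if_all_init1:
  assumes "\<forall>j\<in>Agt n. init j = 1" "i \<in> Agt n"
  shows "basic_decides_by n init (\<lambda>_ _ _. True) i 2"
proof -
  let ?snd = "\<lambda>j. b_send (basic_st n init (\<lambda>_ _ _. True) 0 j)
                          (Pbasic n (basic_st n init (\<lambda>_ _ _. True) 0 j))"
  have all_send_init1: "\<forall>j\<in>Agt n. ?snd j = Some MInit1"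
    using assms(1) by (simp add: Pbasic_def b_send_def)
  then have "{j\<in>Agt n. True \<and> ?snd j = Some MInit1} = Agt n" by blast
  then have "card {j\<in>Agt n. True \<and> ?snd j = Some MInit1} = n" by (simp add: Agt_def)
  then have "Pbasic n (basic_st n init (\<lambda>_ _ _. True) 1 i) = Decide 1"
    using assms all_send_init1 by (auto simp: Pbasic_def Let_def)
  then show ?thesis
    unfolding basic_decides_by_def by (intro exI[of _ 1]) simp
qed

primrec ftime :: "fstate \<Rightarrow> nat" where
  "ftime (FInit v) = 0"
| "ftime (FStep s l) = Suc (ftime s)"

lemma ftime_fip_st [simp]: "ftime (fip_st n r m i) = m"
  by (induction m) auto

lemma fip_st_eq_imp_time_eq: "fip_st n r' m' i = fip_st n r m i \<Longrightarrow> m' = m"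
  by (metis ftime_fip_st)

lemma fip_st_Suc_eq_imp_sender_st_eq:
  assumes "fip_st n r' (Suc m) i = fip_st n r (Suc m) i" "r_F r m j i" "j \<in> Agt n"
  shows "fip_st n r' m j = fip_st n r m j"
proof -
  have "j \<in> set [1..<n+1]" using assms(3) by (auto simp: Agt_def)
  moreover have "map (\<lambda>j. if r_F r' m j i then Some (fip_st n r' m j) else None) [1..<n+1]
               = map (\<lambda>j. if r_F r m j i then Some (fip_st n r m j) else None) [1..<n+1]"
    using assms(1) by simp
  ultimately show ?thesis
    using assms(2) unfolding map_eq_conv by (metis option.distinct(1) option.inject)
qed

lemma fip_st_1_determines_init:
  assumes "fip_st n r' m' i = fip_st n r 1 i" "\<forall>j\<in>Agt n. r_F r 0 j i"
  shows "m' = 1" "\<forall>j\<in>Agt n. r_init r' j = r_init r j"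
proof -
  show "m' = 1" using fip_st_eq_imp_time_eq[OF assms(1)] .
  with assms show "\<forall>j\<in>Agt n. r_init r' j = r_init r j"
    using fip_st_Suc_eq_imp_sender_st_eq[of n r' 0 i r] by auto
qed

lemma failure_free_run_in_fip_runs:
  "\<forall>i\<in>Agt n. init i \<in> {0, 1} \<Longrightarrow> (init, Agt n, \<lambda>_ _ _. True) \<in> fip_runs n t"
  unfolding fip_runs_def SO_def r_init_def r_N_def r_F_def by auto

lemma fip_runs_nonfaulty_nonempty: "t < n \<Longrightarrow> r \<in> fip_runs n t \<Longrightarrow> r_N r \<noteq> {}"
  unfolding fip_runs_def SO_def by (auto simp: Agt_def)

lemma K_imp: "K n t i \<phi> r m \<Longrightarrow> r \<in> fip_runs n t \<Longrightarrow> \<phi> r m"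
  unfolding K_def by blast

lemma C_tfaulty_imp:
  assumes "C_tfaulty n t \<phi> r m" "r \<in> fip_runs n t" "r_N r \<noteq> {}"
  shows "\<phi> r m"
proof -
  obtain A where "C n t (\<lambda>r' m'. (\<forall>i\<in>A. i \<notin> r_N r') \<and> \<phi> r' m') r m"
    using assms(1) unfolding C_tfaulty_def by blast
  then have "(E n t ^^ 1) (\<lambda>r' m'. (\<forall>i\<in>A. i \<notin> r_N r') \<and> \<phi> r' m') r m"
    unfolding C_def by blast
  then have "E n t (\<lambda>r' m'. (\<forall>i\<in>A. i \<notin> r_N r') \<and> \<phi> r' m') r m"
    by simp
  moreover obtain j where "j \<in> r_N r" using assms(3) by blast
  ultimately show ?thesis
    unfolding E_def using K_imp[OF _ assms(2)] by fastforce
qed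

lemma fip_decided_0: "fip_decided P n r 0 j = None"
  unfolding fip_decided_def by simp

lemma fip_decided_Suc_0:
  "fip_decided P n r (Suc 0) j = (case fip_act P n r 0 j of Decide v \<Rightarrow> Some v | Noop \<Rightarrow> None)"
  unfolding fip_decided_def by (simp add: Least_eq_0 split: act.split)

lemma fip_decided_SomeD:
  assumes "fip_decided P n r m j = Some v"
  shows "\<exists>k<m. fip_act P n r k j = Decide v"
proof -
  let ?decides = "\<lambda>k. fip_act P n r k j \<noteq> Noop"
  have "\<exists>k<m. ?decides k"
    using assms unfolding fip_decided_def by (auto split: if_splits)
  then obtain k where k: "k < m" "?decides k" by blast
  have "fip_act P n r (Least ?decides) j = Decide v"
    using assms k unfolding fip_decided_def by (auto split: if_splits act.splits)
  moreover have "Least ?decides \<le> k" using k(2) by (rule Least_le)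
  ultimately show ?thesis using k(1) by (intro exI[of _ "Least ?decides"]) auto
qed

lemma kbp1_act_cases: "kbp1_act P n t i r m \<in> {Noop, Decide 0, Decide 1}"
  unfolding kbp1_act_def by auto

lemma kbp1_act_Decide0_reason:
  assumes "kbp1_act P n t i r m = Decide 0" "r \<in> fip_runs n t" "r_N r \<noteq> {}"
  shows "ex_val n 0 r m \<or> r_init r i = 0 \<or> (\<exists>j\<in>Agt n. jdecided P n j 0 r m)"
proof -
  have "K n t i (C_tfaulty n t (\<lambda>r' m'. no_decided P n 1 r' m' \<and> ex_val n 0 r' m')) r m
      \<or> r_init r i = 0 \<or> K n t i (\<lambda>r' m'. \<exists>j\<in>Agt n. jdecided P n j 0 r' m') r m"
    using assms(1) unfolding kbp1_act_def by (auto split: if_splits)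
  then show ?thesis
    using C_tfaulty_imp[OF _ assms(2,3)] K_imp[OF _ assms(2)] by blast
qed

lemma kbp1_act_Decide1_init0:
  assumes "kbp1_act P n t i r m = Decide 1" "r_init r i = 0"
  shows "K n t i (C_tfaulty n t (\<lambda>r' m'. no_decided P n 0 r' m' \<and> ex_val n 1 r' m')) r m"
  using assms unfolding kbp1_act_def by (auto split: if_splits)

lemma kbp1_act_Noop_undecided:
  assumes "kbp1_act P n t i r m = Noop" "fip_decided P n r m i = None"
  shows "r_init r i \<noteq> 0"
    and "\<not> K n t i (\<lambda>r' m'. \<exists>j\<in>Agt n. jdecided P n j 0 r' m') r m"
    and "\<not> K n t i (\<lambda>r' m'. \<forall>j\<in>Agt n. \<not> deciding P n j 0 r' m') r m"
  using assms unfolding kbp1_act_def by (auto split: if_splits)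

lemma implements_P1_fip_act:
  "implements_P1 n t P \<Longrightarrow> r \<in> fip_runs n t \<Longrightarrow> j \<in> Agt n
     \<Longrightarrow> fip_act P n r m j = kbp1_act P n t j r m"
  unfolding implements_P1_def fip_act_def by blast

text \<open>Deciding 1 would require common knowledge that some preference is 1, but the agent
  cannot exclude the run in which all preferences are 0.\<close>
lemma implements_P1_init0_decides0_at_0:
  assumes "t < n" "implements_P1 n t P" "r \<in> fip_runs n t" "i \<in> Agt n" "r_init r i = 0"
  shows "fip_act P n r 0 i = Decide 0"
proof -
  have "kbp1_act P n t i r 0 \<noteq> Noop"
    using kbp1_act_Noop_undecided(1)[OF _ fip_decided_0] assms(5) by blast
  moreover have "kbp1_act P n t i r 0 \<noteq> Decide 1"
  proof
    assume "kbp1_act P n t i r 0 = Decide 1"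
    then have knows: "K n t i (C_tfaulty n t
                        (\<lambda>r' m'. no_decided P n 0 r' m' \<and> ex_val n 1 r' m')) r 0"
      using kbp1_act_Decide1_init0 assms(5) by blast
    let ?z = "(\<lambda>_. 0::nat, Agt n, \<lambda>_ _ _. True)"
    have z: "?z \<in> fip_runs n t" by (rule failure_free_run_in_fip_runs) simp
    have "fip_st n ?z 0 i = fip_st n r 0 i" using assms(5) by (simp add: r_init_def)
    then have "C_tfaulty n t (\<lambda>r' m'. no_decided P n 0 r' m' \<and> ex_val n 1 r' m') ?z 0"
      using knows z unfolding K_def by blast
    then have "ex_val n 1 ?z 0"
      using C_tfaulty_imp[OF _ z fip_runs_nonfaulty_nonempty[OF assms(1) z]] by blast
    then show False by (simp add: ex_val_def r_init_def)
  qed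
  moreover have "kbp1_act P n t i r 0 \<in> {Noop, Decide 0, Decide 1}"
    by (rule kbp1_act_cases)
  ultimately show ?thesis
    using implements_P1_fip_act[OF assms(2,3,4)] by auto
qed

lemma implements_P1_all_init1_no_decide0_before_2:
  assumes "t < n" "implements_P1 n t P" "r \<in> fip_runs n t"
    and "\<forall>l\<in>Agt n. r_init r l = 1" "j \<in> Agt n" "k < 2"
  shows "fip_act P n r k j \<noteq> Decide 0"
proof -
  have no_reason: "\<not> (ex_val n 0 r m \<or> r_init r l = 0)" if "l \<in> Agt n" for l m
    using assms(4) that by (auto simp: ex_val_def)
  have decide0_reason: "\<exists>l\<in>Agt n. jdecided P n l 0 r m"
    if "fip_act P n r m l = Decide 0" "l \<in> Agt n" for l m
    using kbp1_act_Decide0_reason[OF _ assms(3) fip_runs_nonfaulty_nonempty[OF assms(1,3)]]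
      implements_P1_fip_act[OF assms(2,3)] no_reason that by metis
  have at_0: "fip_act P n r 0 l \<noteq> Decide 0" if "l \<in> Agt n" for l
    using decide0_reason[OF _ that] by (auto simp: jdecided_def)
  have "fip_act P n r 1 j \<noteq> Decide 0"
  proof
    assume "fip_act P n r 1 j = Decide 0"
    then obtain l where "l \<in> Agt n" "fip_decided P n r 1 l = Some 0"
      using decide0_reason assms(5) by (auto simp: jdecided_def)
    then show False using at_0 by (auto simp: fip_decided_Suc_0 split: act.splits)
  qed
  then show ?thesis using at_0[OF assms(5)] assms(6) by (cases k) auto
qed

lemma fip_decides_by_2_if_not_Noop_at_1:
  assumes "implements_P1 n t P" "r \<in> fip_runs n t" "i \<in> Agt n"
    and "fip_act P n r 0 i = Noop \<Longrightarrow> kbp1_act P n t i r 1 \<noteq> Noop"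
  shows "fip_decides_by P n r i 2"
proof (cases "fip_act P n r 0 i = Noop")
  case True
  then have "fip_act P n r 1 i \<noteq> Noop"
    using assms(4) implements_P1_fip_act[OF assms(1-3)] by simp
  then show ?thesis unfolding fip_decides_by_def by (intro exI[of _ 1]) simp
next
  case False
  then show ?thesis unfolding fip_decides_by_def by (intro exI[of _ 0]) simp
qed

lemma fip_decides_by_2_if_some_init0:
  assumes "t < n" "implements_P1 n t P" "\<forall>j\<in>Agt n. init j \<in> {0, 1}"
    and "i0 \<in> Agt n" "init i0 = 0" "i \<in> Agt n"
  shows "fip_decides_by P n (init, Agt n, \<lambda>_ _ _. True) i 2"
proof (rule fip_decides_by_2_if_not_Noop_at_1
         [OF assms(2) failure_free_run_in_fip_runs[OF assms(3)] assms(6)])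
  let ?r = "(init, Agt n, \<lambda>_ _ _. True)"
  assume "fip_act P n ?r 0 i = Noop"
  then have undecided: "fip_decided P n ?r 1 i = None" by (simp add: fip_decided_Suc_0)
  have "K n t i (\<lambda>r' m'. \<exists>j\<in>Agt n. jdecided P n j 0 r' m') ?r 1"
    unfolding K_def
  proof (intro ballI allI impI)
    fix r' m' assume r': "r' \<in> fip_runs n t" and same: "fip_st n r' m' i = fip_st n ?r 1 i"
    have m': "m' = 1" and "r_init r' i0 = 0"
      using fip_st_1_determines_init[OF same] assms(4,5) by (auto simp: r_F_def r_init_def)
    then have "fip_act P n r' 0 i0 = Decide 0"
      using implements_P1_init0_decides0_at_0[OF assms(1,2) r' assms(4)] by blast
    then have "jdecided P n i0 0 r' 1"
      unfolding jdecided_def by (simp add: fip_decided_0 fip_decided_Suc_0)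
    then show "\<exists>j\<in>Agt n. jdecided P n j 0 r' m'" using assms(4) m' by blast
  qed
  then show "kbp1_act P n t i ?r 1 \<noteq> Noop"
    using kbp1_act_Noop_undecided(2)[OF _ undecided] by blast
qed

lemma fip_decides_by_2_if_all_init1:
  assumes "t < n" "implements_P1 n t P" "\<forall>j\<in>Agt n. init j = 1" "i \<in> Agt n"
  shows "fip_decides_by P n (init, Agt n, \<lambda>_ _ _. True) i 2"
proof (rule fip_decides_by_2_if_not_Noop_at_1
         [OF assms(2) failure_free_run_in_fip_runs assms(4)])
  let ?r = "(init, Agt n, \<lambda>_ _ _. True)"
  show "\<forall>j\<in>Agt n. init j \<in> {0, 1}" using assms(3) by simp
  assume "fip_act P n ?r 0 i = Noop"
  then have undecided: "fip_decided P n ?r 1 i = None" by (simp add: fip_decided_Suc_0)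
  have "K n t i (\<lambda>r' m'. \<forall>j\<in>Agt n. \<not> deciding P n j 0 r' m') ?r 1"
    unfolding K_def
  proof (intro ballI allI impI notI)
    fix r' m' j assume r': "r' \<in> fip_runs n t" and same: "fip_st n r' m' i = fip_st n ?r 1 i"
      and j: "j \<in> Agt n" and deciding0: "deciding P n j 0 r' m'"
    have m': "m' = 1" and all1: "\<forall>l\<in>Agt n. r_init r' l = 1"
      using fip_st_1_determines_init[OF same] assms(3) by (auto simp: r_F_def r_init_def)
    have "fip_decided P n r' 2 j = Some 0"
      using deciding0 m' by (simp add: deciding_def numeral_2_eq_2)
    then show False
      using fip_decided_SomeD implements_P1_all_init1_no_decide0_before_2[OF assms(1,2) r' all1 j]
      by blast
  qed
  then show "kbp1_act P n t i ?r 1 \<noteq> Noop"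
    using kbp1_act_Noop_undecided(3)[OF _ undecided] by blast
qed

theorem mainTheorem14:
  fixes n t :: nat and init :: "nat \<Rightarrow> nat" and P :: fprot
  assumes "t + 2 \<le> n"
    and "\<forall>i\<in>Agt n. init i \<in> {0, 1}"
    and "implements_P1 n t P"
  shows "((\<exists>i\<in>Agt n. init i = 0) \<longrightarrow>
            (\<forall>i\<in>Agt n. min_decides_by n t init (\<lambda>_ _ _. True) i 2
                      \<and> basic_decides_by n init (\<lambda>_ _ _. True) i 2
                      \<and> fip_decides_by P n (init, Agt n, \<lambda>_ _ _. True) i 2))
       \<and> ((\<forall>i\<in>Agt n. init i = 1) \<longrightarrow>
            (\<forall>i\<in>Agt n. min_decides_by n t init (\<lambda>_ _ _. True) i (t + 2)
                      \<and> basic_decides_by n init (\<lambda>_ _ _. True) i 2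
                      \<and> fip_decides_by P n (init, Agt n, \<lambda>_ _ _. True) i 2))"
proof (intro conjI impI ballI)
  have "t < n" using assms(1) by simp
  fix i assume i: "i \<in> Agt n"
  {
    assume "\<exists>i\<in>Agt n. init i = 0"
    then obtain i0 where i0: "i0 \<in> Agt n" "init i0 = 0" by blast
    have "init i \<in> {0, 1}" using assms(2) i by blast
    then show "min_decides_by n t init (\<lambda>_ _ _. True) i 2"
      and "basic_decides_by n init (\<lambda>_ _ _. True) i 2"
      using min_decides_by_2_if_some_init0 basic_decides_by_2_if_some_init0 i0 by blast+
    show "fip_decides_by P n (init, Agt n, \<lambda>_ _ _. True) i 2"
      using fip_decides_by_2_if_some_init0[OF \<open>t < n\<close> assms(3,2) i0 i] .
  next
    assume all1: "\<forall>i\<in>Agt n. init i = 1"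
    show "min_decides_by n t init (\<lambda>_ _ _. True) i (t + 2)"
      using min_decides_by_if_all_init1[OF all1 i] .
    show "basic_decides_by n init (\<lambda>_ _ _. True) i 2"
      using basic_decides_by_2_if_all_init1[OF all1 i] .
    show "fip_decides_by P n (init, Agt n, \<lambda>_ _ _. True) i 2"
      using fip_decides_by_2_if_all_init1[OF \<open>t < n\<close> assms(3) all1 i] .
  }
qed

end
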